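(* Assume the (possibly nonconvex) loss $f(\cdot,z)$ is $\beta$-smooth for all $z\in\mathcal{Z}$. Consider full-batch gradient descent with $T$ iterations and learning rates $\eta_t$, $t\le T+1$. Then for the outputs $W_{T+1}\equiv A(S)$ and $W^{(i)}_{T+1}\equiv A(S^{(i)})$, $$\epsilon_{\mathrm{stab}(A)}\le\frac{4\,\epsilon_{\mathrm{path}}}{n^2}\sum_{t=1}^T\eta_t\prod_{j=t+1}^T(1+\beta\eta_j)^2 .$$
   Context: Let $\mathcal{D}$ be a distribution on $\mathcal{Z}$ and $z_1,\dots,z_n,z_i'$ i.i.d. from $\mathcal{D}$; $S=(z_1,\dots,z_n)$, $S^{(i)}$ is $S$ with $z_i$ replaced by $z_i'$. The loss $f:\mathbb{R}^d\times\mathcal{Z}\to[0,\infty)$ is non-negative; $\beta$-smooth means $\|\nabla f(w,z)-\nabla f(u,z)\|_2\le\beta\|w-u\|_2$ for all $w,u$. Full-batch gradient descent (GD) on $S$: from a fixed initial point $W_1\in\mathbb{R}^d$, $W_{t+1}=W_t-\frac{\eta_t}{n}\sum_{j=1}^n\nabla f(W_t,z_j)$, $t=1,\dots,T$, with output $A(S)=W_{T+1}$; $W^{(i)}_t$ are the GD iterates on $S^{(i)}$ with the same initial point $W^{(i)}_1=W_1$ and the same step sizes. Expected output stability $\epsilon_{\mathrm{stab}(A)}=\mathbb{E}[\|A(S)-A(S^{(i)})\|_2^2]$; expected path error $\epsilon_{\mathrm{path}}=\sum_{t=1}^T\eta_t\,\mathbb{E}[\|\nabla f(W_t,z_i)\|_2^2]$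 (expectations over all samples). *)

theory Defs
  imports "HOL-Probability.Probability"
begin

text \<open>The sample set is encoded as a function
  S :: nat => 'z whose values S 0, ..., S (n-1) are z_1, ..., z_n.
  gd grad eta n W1 S k is the iterate W_(k+1); i.e. gd ... 0 = W_1 and
  W_(t+1) = W_t - (eta_t / n) * sum_j grad(W_t, z_j).\<close>
primrec gd :: "('a::real_normed_vector \<Rightarrow> 'z \<Rightarrow> 'a) \<Rightarrow> (nat \<Rightarrow> real) \<Rightarrow> nat \<Rightarrow> 'a
               \<Rightarrow> (nat \<Rightarrow> 'z) \<Rightarrow> nat \<Rightarrow> 'a" where
  "gd grad eta n W1 S 0 = W1"
| "gd grad eta n W1 S (Suc k) =
     gd grad eta n W1 S k
     - (eta (Suc k) / real n) *\<^sub>R (\<Sum>j<n. grad (gd grad eta n W1 S k) (S j))"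

text \<open>Sample space: s 0, ..., s (n-1) are z_1, ..., z_n and s n is the replacement
  sample z_i'; all i.i.d. from D. The perturbed sample S^(i) is s(i := s n).\<close>
definition sample_space :: "'z measure \<Rightarrow> nat \<Rightarrow> (nat \<Rightarrow> 'z) measure" where
  "sample_space D n = PiM {..n} (\<lambda>_. D)"

definition eps_stab :: "'z measure \<Rightarrow> ('a::real_normed_vector \<Rightarrow> 'z \<Rightarrow> 'a) \<Rightarrow> (nat \<Rightarrow> real)
    \<Rightarrow> nat \<Rightarrow> 'a \<Rightarrow> nat \<Rightarrow> nat \<Rightarrow> ennreal" where
  "eps_stab D grad eta n W1 T i =
     (\<integral>\<^sup>+ s. ennreal ((norm (gd grad eta n W1 s T - gd grad eta n W1 (s(i := s n)) T))\<^sup>2)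
        \<partial>sample_space D n)"

definition eps_path :: "'z measure \<Rightarrow> ('a::real_normed_vector \<Rightarrow> 'z \<Rightarrow> 'a) \<Rightarrow> (nat \<Rightarrow> real)
    \<Rightarrow> nat \<Rightarrow> 'a \<Rightarrow> nat \<Rightarrow> nat \<Rightarrow> ennreal" where
  "eps_path D grad eta n W1 T i =
     (\<Sum>t\<in>{1..T}. ennreal (eta t) *
        (\<integral>\<^sup>+ s. ennreal ((norm (grad (gd grad eta n W1 s (t - 1)) (s i)))\<^sup>2) \<partial>sample_space D n))"

end

theory Submission
  imports Defs
begin

text \<open>Replacing z_i by z_i' changes only one of the n gradients averaged in each step, so by
  smoothness the distance d_t between the two trajectories satisfies
  d_(t+1) <= (1 + beta eta_t) d_t + (eta_t / n) (|grad f(W_t, z_i)| + |grad f(W'_t, z_i')|).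
  Unrolling this recursion and applying Cauchy-Schwarz with weights eta_t bounds d_(T+1)^2 by
  2/n^2 times the weighted sum of the squared growth factors times the weighted squared gradient
  norms along both trajectories. Since (S, z_i') and (S^(i), z_i) have the same distribution,
  both trajectories have the same expected path error, which gives the factor 4.\<close>

lemma gronwall_sum_bound:
  fixes d c q :: "nat \<Rightarrow> real"
  assumes "d 0 = 0"
    and q: "\<And>t. t \<in> {1..T} \<Longrightarrow> 0 \<le> q t"
    and step: "\<And>k. k < T \<Longrightarrow> d (Suc k) \<le> q (Suc k) * d k + c (Suc k)"
  shows "d T \<le> (\<Sum>t\<in>{1..T}. c t * (\<Prod>j\<in>{t+1..T}. q j))"
  using q step
proof (induction T)
  case 0
  then show ?case using assms(1) by simp
next
  case (Suc T)
  have "d (Suc T) \<le> q (Suc T) * d T + c (Suc T)"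
    using Suc.prems(2) by simp
  also have "\<dots> \<le> q (Suc T) * (\<Sum>t\<in>{1..T}. c t * (\<Prod>j\<in>{t+1..T}. q j)) + c (Suc T)"
    using Suc by (intro add_right_mono mult_left_mono) auto
  also have "\<dots> = (\<Sum>t\<in>{1..Suc T}. c t * (\<Prod>j\<in>{t+1..Suc T}. q j))"
    by (auto simp: sum_distrib_left mult_ac intro!: sum.cong)
  finally show ?case .
qed

lemma Cauchy_Schwarz_ineq_sum_weighted:
  fixes w x y :: "'a \<Rightarrow> real"
  assumes "\<And>t. t \<in> A \<Longrightarrow> 0 \<le> w t"
  shows "(\<Sum>t\<in>A. w t * x t * y t)\<^sup>2 \<le> (\<Sum>t\<in>A. w t * (x t)\<^sup>2) * (\<Sum>t\<in>A. w t * (y t)\<^sup>2)"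
proof -
  have sqrt_w: "(sqrt (w t))\<^sup>2 = w t" if "t \<in> A" for t
    using assms[OF that] by simp
  have "(\<Sum>t\<in>A. w t * x t * y t) = (\<Sum>t\<in>A. (sqrt (w t) * x t) * (sqrt (w t) * y t))"
    by (rule sum.cong) (simp_all add: sqrt_w flip: power2_eq_square)
  moreover have "(\<Sum>t\<in>A. w t * (z t)\<^sup>2) = (\<Sum>t\<in>A. (sqrt (w t) * z t)\<^sup>2)" for z
    by (rule sum.cong) (simp_all add: sqrt_w power_mult_distrib)
  ultimately show ?thesis
    using Cauchy_Schwarz_ineq_sum by metis
qed

lemma gd_cong:
  assumes "\<And>j. j < n \<Longrightarrow> S j = S' j"
  shows "gd grad eta n W1 S k = gd grad eta n W1 S' k"
  by (induction k) (auto simp: assms intro!: sum.cong)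

definition gd_grad_sq :: "('a::real_normed_vector \<Rightarrow> 'z \<Rightarrow> 'a) \<Rightarrow> (nat \<Rightarrow> real) \<Rightarrow> nat \<Rightarrow> 'a
    \<Rightarrow> nat \<Rightarrow> (nat \<Rightarrow> 'z) \<Rightarrow> nat \<Rightarrow> real" where
  "gd_grad_sq grad eta n W1 i S t = (norm (grad (gd grad eta n W1 S (t - 1)) (S i)))\<^sup>2"

lemma norm_gd_Suc_diff_le:
  fixes grad :: "'a::real_normed_vector \<Rightarrow> 'z \<Rightarrow> 'a"
    and W1 :: 'a
  assumes i: "i < n" and beta: "0 \<le> beta" and eta: "0 \<le> eta (Suc k)"
    and agree: "\<And>j. j < n \<Longrightarrow> j \<noteq> i \<Longrightarrow> S' j = S j"
    and smooth: "\<And>w u j. j < n \<Longrightarrow> norm (grad w (S j) - grad u (S j)) \<le> beta * norm (w - u)"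
  defines "W \<equiv> gd grad eta n W1 S k" and "W' \<equiv> gd grad eta n W1 S' k"
  shows "norm (gd grad eta n W1 S (Suc k) - gd grad eta n W1 S' (Suc k))
    \<le> (1 + beta * eta (Suc k)) * norm (W - W')
       + eta (Suc k) / n * (norm (grad W (S i)) + norm (grad W' (S' i)))"
proof -
  define G where "G = (\<Sum>j<n. grad W (S j)) - (\<Sum>j<n. grad W' (S' j))"
  define r where "r = norm (grad W (S i)) + norm (grad W' (S' i))"
  have summand_le: "norm (grad W (S j) - grad W' (S' j)) \<le> beta * norm (W - W') + (if j = i then r else 0)"
    if "j < n" for j
  proof (cases "j = i")
    case True
    then show ?thesis
      using norm_triangle_ineq4[of "grad W (S i)" "grad W' (S' i)"] beta
      unfolding r_def by (simp add: add_increasing)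
  next
    case False
    then show ?thesis using agree smooth that by simp
  qed
  have "norm G \<le> (\<Sum>j<n. norm (grad W (S j) - grad W' (S' j)))"
    unfolding G_def sum_subtractf[symmetric] by (rule norm_sum)
  also have "\<dots> \<le> (\<Sum>j<n. beta * norm (W - W') + (if j = i then r else 0))"
    using summand_le by (intro sum_mono) auto
  also have "\<dots> = n * beta * norm (W - W') + r"
    using i by (simp add: sum.distrib)
  finally have G_le: "norm G \<le> n * beta * norm (W - W') + r" .
  have "norm (gd grad eta n W1 S (Suc k) - gd grad eta n W1 S' (Suc k))
      = norm ((W - W') - (eta (Suc k) / n) *\<^sub>R G)"
    by (simp add: W_def W'_def G_def scaleR_diff_right algebra_simps)
  also have "\<dots> \<le> norm (W - W') + eta (Suc k) / n * norm G"
    using norm_triangle_ineq4[of "W - W'" "(eta (Suc k) / n) *\<^sub>R G"] eta by simp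
  also have "\<dots> \<le> norm (W - W') + eta (Suc k) / n * (n * beta * norm (W - W') + r)"
    using G_le eta by (intro add_left_mono mult_left_mono) auto
  also have "\<dots> = (1 + beta * eta (Suc k)) * norm (W - W') + eta (Suc k) / n * r"
    using i by (simp add: distrib_left distrib_right)
  finally show ?thesis unfolding r_def .
qed

lemma norm_gd_diff_le:
  fixes grad :: "'a::real_normed_vector \<Rightarrow> 'z \<Rightarrow> 'a"
  assumes i: "i < n" and beta: "0 \<le> beta" and eta: "\<And>t. t \<in> {1..T} \<Longrightarrow> 0 \<le> eta t"
    and agree: "\<And>j. j < n \<Longrightarrow> j \<noteq> i \<Longrightarrow> S' j = S j"
    and smooth: "\<And>w u j. j < n \<Longrightarrow> norm (grad w (S j) - grad u (S j)) \<le> beta * norm (w - u)"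
  shows "norm (gd grad eta n W1 S T - gd grad eta n W1 S' T)
    \<le> (\<Sum>t\<in>{1..T}. eta t / n * (norm (grad (gd grad eta n W1 S (t - 1)) (S i))
          + norm (grad (gd grad eta n W1 S' (t - 1)) (S' i))) * (\<Prod>j\<in>{t+1..T}. 1 + beta * eta j))"
proof (rule gronwall_sum_bound[where d = "\<lambda>k. norm (gd grad eta n W1 S k - gd grad eta n W1 S' k)"])
  show "0 \<le> 1 + beta * eta t" if "t \<in> {1..T}" for t
    using beta eta[OF that] by simp
qed (use norm_gd_Suc_diff_le[where grad = grad and S = S, OF i beta _ agree smooth] eta in auto)

lemma gd_diff_sq_le:
  fixes grad :: "'a::real_normed_vector \<Rightarrow> 'z \<Rightarrow> 'a"
  assumes i: "i < n" and beta: "0 \<le> beta" and eta: "\<And>t. t \<in> {1..T} \<Longrightarrow> 0 \<le> eta t"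
    and agree: "\<And>j. j < n \<Longrightarrow> j \<noteq> i \<Longrightarrow> S' j = S j"
    and smooth: "\<And>w u j. j < n \<Longrightarrow> norm (grad w (S j) - grad u (S j)) \<le> beta * norm (w - u)"
  shows "(norm (gd grad eta n W1 S T - gd grad eta n W1 S' T))\<^sup>2
    \<le> 2 / (real n)\<^sup>2 * (\<Sum>t\<in>{1..T}. eta t * (\<Prod>j\<in>{t+1..T}. (1 + beta * eta j)\<^sup>2))
       * (\<Sum>t\<in>{1..T}. eta t * (gd_grad_sq grad eta n W1 i S t + gd_grad_sq grad eta n W1 i S' t))"
proof -
  define a where "a t = norm (grad (gd grad eta n W1 S (t - 1)) (S i))" for t
  define b where "b t = norm (grad (gd grad eta n W1 S' (t - 1)) (S' i))" for t
  define p where "p t = (\<Prod>j\<in>{t+1..T}. 1 + beta * eta j)" for t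
  have ab_sq: "((a t + b t) / n)\<^sup>2 \<le> 2 / (real n)\<^sup>2 * ((a t)\<^sup>2 + (b t)\<^sup>2)" for t
  proof -
    have "(a t + b t)\<^sup>2 \<le> 2 * ((a t)\<^sup>2 + (b t)\<^sup>2)"
      using zero_le_power2[of "a t - b t"] unfolding power2_diff power2_sum by (simp add: algebra_simps)
    then show ?thesis
      by (simp add: power_divide divide_right_mono)
  qed
  have "norm (gd grad eta n W1 S T - gd grad eta n W1 S' T) \<le> (\<Sum>t\<in>{1..T}. eta t * ((a t + b t) / n) * p t)"
    using norm_gd_diff_le[where grad = grad and S = S, OF assms] by (simp add: a_def b_def p_def)
  then have "(norm (gd grad eta n W1 S T - gd grad eta n W1 S' T))\<^sup>2
      \<le> (\<Sum>t\<in>{1..T}. eta t * ((a t + b t) / n) * p t)\<^sup>2"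
    by (rule power_mono) simp
  also have "\<dots> \<le> (\<Sum>t\<in>{1..T}. eta t * ((a t + b t) / n)\<^sup>2) * (\<Sum>t\<in>{1..T}. eta t * (p t)\<^sup>2)"
    using eta by (rule Cauchy_Schwarz_ineq_sum_weighted)
  also have "\<dots> \<le> (2 / (real n)\<^sup>2 * (\<Sum>t\<in>{1..T}. eta t * ((a t)\<^sup>2 + (b t)\<^sup>2))) * (\<Sum>t\<in>{1..T}. eta t * (p t)\<^sup>2)"
  proof (rule mult_right_mono)
    show "(\<Sum>t\<in>{1..T}. eta t * ((a t + b t) / n)\<^sup>2) \<le> 2 / (real n)\<^sup>2 * (\<Sum>t\<in>{1..T}. eta t * ((a t)\<^sup>2 + (b t)\<^sup>2))"
      unfolding sum_distrib_left
    proof (rule sum_mono)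
      fix t assume "t \<in> {1..T}"
      then show "eta t * ((a t + b t) / n)\<^sup>2 \<le> 2 / (real n)\<^sup>2 * (eta t * ((a t)\<^sup>2 + (b t)\<^sup>2))"
        using mult_left_mono[OF ab_sq eta] by (simp add: mult.left_commute)
    qed
  qed (use eta in \<open>auto intro: sum_nonneg\<close>)
  also have "\<dots> = 2 / (real n)\<^sup>2 * (\<Sum>t\<in>{1..T}. eta t * (\<Prod>j\<in>{t+1..T}. (1 + beta * eta j)\<^sup>2))
      * (\<Sum>t\<in>{1..T}. eta t * ((a t)\<^sup>2 + (b t)\<^sup>2))"
    unfolding p_def prod_power_distrib by (simp only: mult_ac)
  finally show ?thesis
    unfolding a_def b_def gd_grad_sq_def .
qed

lemma sample_space_component:
  assumes "s \<in> space (sample_space D n)" and "j \<le> n"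
  shows "s j \<in> space D"
  using assms by (auto simp: sample_space_def space_PiM PiE_iff)

lemma borel_measurable_grad_sample:
  fixes grad :: "'a::euclidean_space \<Rightarrow> 'z \<Rightarrow> 'a"
  assumes grad: "(\<lambda>(w, z). grad w z) \<in> borel_measurable (borel \<Otimes>\<^sub>M D)"
    and F: "F \<in> borel_measurable (sample_space D n)" and j: "j \<le> n"
  shows "(\<lambda>s. grad (F s) (s j)) \<in> borel_measurable (sample_space D n)"
proof -
  have "(\<lambda>s. (F s, s j)) \<in> measurable (sample_space D n) (borel \<Otimes>\<^sub>M D)"
    using F j by (auto simp: sample_space_def intro!: measurable_Pair measurable_component_singleton)
  from measurable_compose[OF this grad] show ?thesis by simp
qed

lemma borel_measurable_gd:
  fixes grad :: "'a::euclidean_space \<Rightarrow> 'z \<Rightarrow> 'a"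
  assumes grad: "(\<lambda>(w, z). grad w z) \<in> borel_measurable (borel \<Otimes>\<^sub>M D)"
  shows "(\<lambda>s. gd grad eta n W1 s k) \<in> borel_measurable (sample_space D n)"
proof (induction k)
  case 0
  then show ?case by simp
next
  case (Suc k)
  have "(\<lambda>s. grad (gd grad eta n W1 s k) (s j)) \<in> borel_measurable (sample_space D n)" if "j < n" for j
    using borel_measurable_grad_sample[OF grad Suc] that by simp
  then show ?case
    using Suc by (simp add: borel_measurable_diff borel_measurable_scaleR borel_measurable_sum)
qed

lemma measurable_sample_replace:
  assumes "i \<le> n"
  shows "(\<lambda>s. s(i := s n)) \<in> measurable (sample_space D n) (sample_space D n)"
  unfolding sample_space_def
proof (rule measurable_PiM_single')
  show "(\<lambda>s. (s(i := s n)) j) \<in> measurable (PiM {..n} (\<lambda>_. D)) D" if "j \<in> {..n}" for j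
    using that by (auto intro!: measurable_component_singleton)
  show "(\<lambda>s. s(i := s n)) \<in> space (PiM {..n} (\<lambda>_. D)) \<rightarrow> (\<Pi>\<^sub>E j\<in>{..n}. space D)"
    using assms by (auto simp: space_PiM PiE_iff)
qed

text \<open>The coordinates of the sample are i.i.d., so transposing coordinates i and n preserves
  the product measure; on the coordinates below n this transposition acts as the replacement.\<close>
lemma nn_integral_sample_replace:
  fixes h :: "(nat \<Rightarrow> 'z) \<Rightarrow> ennreal"
  assumes D: "prob_space D" and i: "i < n"
    and h: "h \<in> borel_measurable (sample_space D n)"
    and h_local: "\<And>s s'. (\<And>j. j < n \<Longrightarrow> s j = s' j) \<Longrightarrow> h s = h s'"
  shows "(\<integral>\<^sup>+ s. h (s(i := s n)) \<partial>sample_space D n) = (\<integral>\<^sup>+ s. h s \<partial>sample_space D n)"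
proof -
  define \<tau> where "\<tau> = Transposition.transpose i n"
  define swap :: "(nat \<Rightarrow> 'z) \<Rightarrow> nat \<Rightarrow> 'z" where "swap = (\<lambda>s. \<lambda>m\<in>{..n}. s (\<tau> m))"
  have \<tau>: "inj_on \<tau> {..n}" "\<tau> \<in> {..n} \<rightarrow> {..n}"
    using i by (auto simp: \<tau>_def Transposition.transpose_def)
  have swap_distr: "distr (sample_space D n) (sample_space D n) swap = sample_space D n"
    using distr_PiM_reindex[of "{..n}" "\<lambda>_. D", OF D \<tau>] by (simp add: sample_space_def swap_def)
  have swap_meas: "swap \<in> measurable (sample_space D n) (sample_space D n)"
    unfolding sample_space_def swap_def
    by (rule measurable_restrict) (use \<tau> in \<open>auto intro!: measurable_component_singleton\<close>)
  have "(\<integral>\<^sup>+ s. h s \<partial>sample_space D n) = (\<integral>\<^sup>+ s. h (swap s) \<partial>sample_space D n)"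
    using nn_integral_distr[OF swap_meas] h by (simp add: swap_distr)
  also have "\<dots> = (\<integral>\<^sup>+ s. h (s(i := s n)) \<partial>sample_space D n)"
    by (intro nn_integral_cong h_local) (auto simp: swap_def \<tau>_def Transposition.transpose_def)
  finally show ?thesis ..
qed

lemma borel_measurable_gd_grad_sq:
  fixes grad :: "'a::euclidean_space \<Rightarrow> 'z \<Rightarrow> 'a"
  assumes grad: "(\<lambda>(w, z). grad w z) \<in> borel_measurable (borel \<Otimes>\<^sub>M D)" and i: "i \<le> n"
  shows "(\<lambda>s. gd_grad_sq grad eta n W1 i s t) \<in> borel_measurable (sample_space D n)"
  unfolding gd_grad_sq_def using borel_measurable_grad_sample[OF grad borel_measurable_gd[OF grad] i] by simp

lemma borel_measurable_gd_grad_sq_replace: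
  fixes grad :: "'a::euclidean_space \<Rightarrow> 'z \<Rightarrow> 'a"
  assumes grad: "(\<lambda>(w, z). grad w z) \<in> borel_measurable (borel \<Otimes>\<^sub>M D)" and i: "i \<le> n"
  shows "(\<lambda>s. gd_grad_sq grad eta n W1 i (s(i := s n)) t) \<in> borel_measurable (sample_space D n)"
  using measurable_compose[OF measurable_sample_replace borel_measurable_gd_grad_sq[OF grad]] i by simp

lemma nn_integral_gd_grad_sq_replace:
  fixes grad :: "'a::euclidean_space \<Rightarrow> 'z \<Rightarrow> 'a"
  assumes D: "prob_space D" and i: "i < n"
    and grad: "(\<lambda>(w, z). grad w z) \<in> borel_measurable (borel \<Otimes>\<^sub>M D)"
  shows "(\<integral>\<^sup>+ s. ennreal (gd_grad_sq grad eta n W1 i (s(i := s n)) t) \<partial>sample_space D n)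
       = (\<integral>\<^sup>+ s. ennreal (gd_grad_sq grad eta n W1 i s t) \<partial>sample_space D n)"
proof (rule nn_integral_sample_replace[OF D i])
  show "(\<lambda>s. ennreal (gd_grad_sq grad eta n W1 i s t)) \<in> borel_measurable (sample_space D n)"
    using borel_measurable_gd_grad_sq[OF grad] i by simp
  fix s s' :: "nat \<Rightarrow> 'z" assume agree: "\<And>j. j < n \<Longrightarrow> s j = s' j"
  show "ennreal (gd_grad_sq grad eta n W1 i s t) = ennreal (gd_grad_sq grad eta n W1 i s' t)"
    unfolding gd_grad_sq_def by (simp only: gd_cong[of n s s' grad eta W1 "t - 1", OF agree] agree[OF i])
qed

lemma nn_integral_path_errors_eq_eps_path:
  fixes grad :: "'a::euclidean_space \<Rightarrow> 'z \<Rightarrow> 'a"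
  assumes D: "prob_space D" and i: "i < n"
    and grad: "(\<lambda>(w, z). grad w z) \<in> borel_measurable (borel \<Otimes>\<^sub>M D)"
  shows "(\<integral>\<^sup>+ s. (\<Sum>t\<in>{1..T}. ennreal (eta t) * (ennreal (gd_grad_sq grad eta n W1 i s t)
            + ennreal (gd_grad_sq grad eta n W1 i (s(i := s n)) t))) \<partial>sample_space D n)
       = 2 * eps_path D grad eta n W1 T i"
proof -
  note [measurable] = borel_measurable_gd_grad_sq[OF grad less_imp_le[OF i]]
    borel_measurable_gd_grad_sq_replace[OF grad less_imp_le[OF i]]
  have "(\<integral>\<^sup>+ s. (\<Sum>t\<in>{1..T}. ennreal (eta t) * (ennreal (gd_grad_sq grad eta n W1 i s t)
            + ennreal (gd_grad_sq grad eta n W1 i (s(i := s n)) t))) \<partial>sample_space D n)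
      = (\<Sum>t\<in>{1..T}. ennreal (eta t) * (2 * (\<integral>\<^sup>+ s. ennreal (gd_grad_sq grad eta n W1 i s t) \<partial>sample_space D n)))"
    by (simp add: nn_integral_cmult nn_integral_sum nn_integral_add
        nn_integral_gd_grad_sq_replace[OF D i grad] flip: mult_2)
  also have "\<dots> = 2 * eps_path D grad eta n W1 T i"
    unfolding eps_path_def gd_grad_sq_def by (simp only: sum_distrib_left mult_ac)
  finally show ?thesis .
qed

lemma ennreal_gd_replace_diff_sq_le:
  fixes grad :: "'a::real_normed_vector \<Rightarrow> 'z \<Rightarrow> 'a"
  assumes smooth: "\<And>w u z. z \<in> space D \<Longrightarrow> norm (grad w z - grad u z) \<le> beta * norm (w - u)"
    and beta: "0 \<le> beta" and eta: "\<And>t. t \<in> {1..T} \<Longrightarrow> 0 \<le> eta t"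
    and i: "i < n" and s: "s \<in> space (sample_space D n)"
  shows "ennreal ((norm (gd grad eta n W1 s T - gd grad eta n W1 (s(i := s n)) T))\<^sup>2)
    \<le> ennreal (2 / (real n)\<^sup>2 * (\<Sum>t\<in>{1..T}. eta t * (\<Prod>j\<in>{t+1..T}. (1 + beta * eta j)\<^sup>2)))
       * (\<Sum>t\<in>{1..T}. ennreal (eta t) * (ennreal (gd_grad_sq grad eta n W1 i s t)
            + ennreal (gd_grad_sq grad eta n W1 i (s(i := s n)) t)))"
proof -
  define Q where "Q = (\<Sum>t\<in>{1..T}. eta t * (\<Prod>j\<in>{t+1..T}. (1 + beta * eta j)\<^sup>2))"
  define g where "g s t = gd_grad_sq grad eta n W1 i s t" for s t
  have "0 \<le> Q"
    unfolding Q_def using eta by (auto intro!: sum_nonneg mult_nonneg_nonneg prod_nonneg)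
  moreover have "(norm (gd grad eta n W1 s T - gd grad eta n W1 (s(i := s n)) T))\<^sup>2
      \<le> 2 / (real n)\<^sup>2 * Q * (\<Sum>t\<in>{1..T}. eta t * (g s t + g (s(i := s n)) t))"
    unfolding Q_def g_def
    using gd_diff_sq_le[where grad = grad and S = s and S' = "s(i := s n)", OF i beta eta]
      smooth sample_space_component[OF s] by simp
  ultimately have "ennreal ((norm (gd grad eta n W1 s T - gd grad eta n W1 (s(i := s n)) T))\<^sup>2)
      \<le> ennreal (2 / (real n)\<^sup>2 * Q) * ennreal (\<Sum>t\<in>{1..T}. eta t * (g s t + g (s(i := s n)) t))"
    by (simp add: ennreal_leI flip: ennreal_mult')
  also have "ennreal (\<Sum>t\<in>{1..T}. eta t * (g s t + g (s(i := s n)) t))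
      = (\<Sum>t\<in>{1..T}. ennreal (eta t) * (ennreal (g s t) + ennreal (g (s(i := s n)) t)))"
    by (subst sum_ennreal[symmetric])
      (use eta in \<open>auto simp: g_def gd_grad_sq_def ennreal_mult intro!: sum.cong\<close>)
  finally show ?thesis
    unfolding Q_def g_def .
qed

lemma eps_stab_le_eps_path:
  fixes grad :: "'a::euclidean_space \<Rightarrow> 'z \<Rightarrow> 'a"
  assumes D: "prob_space D"
    and smooth: "\<And>w u z. z \<in> space D \<Longrightarrow> norm (grad w z - grad u z) \<le> beta * norm (w - u)"
    and grad: "(\<lambda>(w, z). grad w z) \<in> borel_measurable (borel \<Otimes>\<^sub>M D)"
    and beta: "0 \<le> beta" and eta: "\<And>t. t \<in> {1..T} \<Longrightarrow> 0 \<le> eta t"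
    and i: "i < n"
  shows "eps_stab D grad eta n W1 T i
         \<le> ennreal (4 / (real n)\<^sup>2) * eps_path D grad eta n W1 T i
             * ennreal (\<Sum>t\<in>{1..T}. eta t * (\<Prod>j\<in>{t+1..T}. (1 + beta * eta j)\<^sup>2))"
proof -
  define Q where "Q = (\<Sum>t\<in>{1..T}. eta t * (\<Prod>j\<in>{t+1..T}. (1 + beta * eta j)\<^sup>2))"
  note [measurable] = borel_measurable_gd_grad_sq[OF grad less_imp_le[OF i]]
    borel_measurable_gd_grad_sq_replace[OF grad less_imp_le[OF i]]
  have Q: "0 \<le> Q"
    unfolding Q_def using eta by (auto intro!: sum_nonneg mult_nonneg_nonneg prod_nonneg)
  have "ennreal (2 / (real n)\<^sup>2 * Q) * 2 = ennreal (2 / (real n)\<^sup>2 * Q * 2)"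
    using ennreal_mult''[of 2 "2 / (real n)\<^sup>2 * Q"] by simp
  also have "\<dots> = ennreal (4 / (real n)\<^sup>2) * ennreal Q"
    using ennreal_mult[of "4 / (real n)\<^sup>2" Q] Q by simp
  finally have two_Q: "ennreal (2 / (real n)\<^sup>2 * Q) * 2 = ennreal (4 / (real n)\<^sup>2) * ennreal Q" .
  have "eps_stab D grad eta n W1 T i
      \<le> (\<integral>\<^sup>+ s. ennreal (2 / (real n)\<^sup>2 * Q)
            * (\<Sum>t\<in>{1..T}. ennreal (eta t) * (ennreal (gd_grad_sq grad eta n W1 i s t)
                + ennreal (gd_grad_sq grad eta n W1 i (s(i := s n)) t))) \<partial>sample_space D n)"
    unfolding eps_stab_def Q_def
    by (rule nn_integral_mono) (rule ennreal_gd_replace_diff_sq_le[OF smooth beta eta i])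
  also have "\<dots> = ennreal (2 / (real n)\<^sup>2 * Q) * (2 * eps_path D grad eta n W1 T i)"
    unfolding nn_integral_path_errors_eq_eps_path[OF D i grad, symmetric]
    by (intro nn_integral_cmult) measurable
  also have "\<dots> = ennreal (4 / (real n)\<^sup>2) * ennreal Q * eps_path D grad eta n W1 T i"
    unfolding two_Q[symmetric] by (simp only: mult_ac)
  finally show ?thesis
    unfolding Q_def by (simp only: mult_ac)
qed

text \<open>Smoothness at two distinct points forces beta \<ge> 0.\<close>
theorem theorem7:
  fixes D :: "'z measure"
    and f :: "'a::euclidean_space \<Rightarrow> 'z \<Rightarrow> real"
    and grad :: "'a \<Rightarrow> 'z \<Rightarrow> 'a"
    and eta :: "nat \<Rightarrow> real"
    and beta :: real and W1 :: 'a and n T i :: nat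
  assumes D: "prob_space D"
    and nonneg: "\<And>w z. z \<in> space D \<Longrightarrow> 0 \<le> f w z"
    and gradient: "\<And>w z. z \<in> space D \<Longrightarrow> GDERIV (\<lambda>v. f v z) w :> grad w z"
    and smooth: "\<And>w u z. z \<in> space D \<Longrightarrow> norm (grad w z - grad u z) \<le> beta * norm (w - u)"
    and grad_meas: "(\<lambda>(w, z). grad w z) \<in> borel_measurable (borel \<Otimes>\<^sub>M D)"
    and eta_pos: "\<And>t. t \<in> {1..T} \<Longrightarrow> 0 < eta t"
    and i: "i < n"
  shows "eps_stab D grad eta n W1 T i
         \<le> ennreal (4 / (real n)\<^sup>2) * eps_path D grad eta n W1 T i
             * ennreal (\<Sum>t\<in>{1..T}. eta t * (\<Prod>j\<in>{t+1..T}. (1 + beta * eta j)\<^sup>2))"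
proof (rule eps_stab_le_eps_path[OF D smooth grad_meas _ _ i])
  obtain z where z: "z \<in> space D"
    using prob_space.not_empty[OF D] by auto
  obtain e :: 'a where e: "e \<in> Basis"
    using nonempty_Basis by blast
  have "0 \<le> norm (grad e z - grad 0 z)"
    by simp
  also have "\<dots> \<le> beta * norm (e - 0)"
    using smooth[OF z] .
  finally show "0 \<le> beta"
    using e by (simp add: zero_le_mult_iff)
  show "0 \<le> eta t" if "t \<in> {1..T}" for t
    using eta_pos[OF that] by simp
qed

end
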